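(* Let $G$ be a discrete group that contains an amenable normalish subgroup. Then for every coefficient $G$-module $(\pi,E)$ with $E$ mixing and every $n\ge 0$, the bounded cohomology group $H_b^n(G,E)$ is trivial.
   Context: A subgroup $H<G$ is normalish if for every $n\ge1$ and $t_1,\dots,t_n\in G$ the intersection $\bigcap_i t_iHt_i^{-1}$ is infinite. A coefficient $G$-module $(\pi,E)$ is an isometric linear representation $\pi$ of $G$ on a Banach space $E$ which is the dual of a separable Banach space, such that each $\pi(s)$ is weak*-continuous. $E$ is mixing if for every $x\in E\setminus\{0\}$ the stabilizer $\{s\in G:\pi(s)x=x\}$ is finite. The bounded cohomology $H_b^n(G,E)$ is the $n$-th cohomology of the complex $0\to\ell^\infty(G,E)^G\to\ell^\infty(G^2,E)^G\to\cdots$ of bounded $G$-equivariant functions with the standard homogeneous coboundary maps. *)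

theory Defs
  imports "HOL-Analysis.Analysis" "HOL-Algebra.Group"
begin

definition normalish :: "('g, 'b) monoid_scheme \<Rightarrow> 'g set \<Rightarrow> bool" where
  "normalish G H \<longleftrightarrow> subgroup H G \<and>
     (\<forall>T. finite T \<and> T \<noteq> {} \<and> T \<subseteq> carrier G \<longrightarrow>
        infinite (\<Inter>t\<in>T. (\<lambda>h. t \<otimes>\<^bsub>G\<^esub> h \<otimes>\<^bsub>G\<^esub> inv\<^bsub>G\<^esub> t) ` H))"

definition bdd_on :: "'g set \<Rightarrow> ('g \<Rightarrow> real) \<Rightarrow> bool" where
  "bdd_on A f \<longleftrightarrow> (\<exists>B. \<forall>x\<in>A. \<bar>f x\<bar> \<le> B)"

definition amenable_subgroup :: "('g, 'b) monoid_scheme \<Rightarrow> 'g set \<Rightarrow> bool" where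
  "amenable_subgroup G H \<longleftrightarrow> subgroup H G \<and>
     (\<exists>m :: ('g \<Rightarrow> real) \<Rightarrow> real.
        (\<forall>f f'. (\<forall>x\<in>H. f x = f' x) \<longrightarrow> m f = m f') \<and>
        (\<forall>f g a b. bdd_on H f \<and> bdd_on H g \<longrightarrow>
            m (\<lambda>x. a * f x + b * g x) = a * m f + b * m g) \<and>
        (\<forall>f. bdd_on H f \<and> (\<forall>x\<in>H. f x \<ge> 0) \<longrightarrow> m f \<ge> 0) \<and>
        m (\<lambda>_. 1) = 1 \<and>
        (\<forall>f h. bdd_on H f \<and> h \<in> H \<longrightarrow> m (\<lambda>x. f (h \<otimes>\<^bsub>G\<^esub> x)) = m f))"

text \<open>The weak-* topology on the dual space of 'f (the space of bounded linear
  functionals 'f \<Rightarrow>L real): the coarsest topology making all evaluations continuous.\<close>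
definition weak_star_topology :: "('f::real_normed_vector \<Rightarrow>\<^sub>L real) topology" where
  "weak_star_topology =
     pullback_topology UNIV blinfun_apply (product_topology (\<lambda>_. euclidean) UNIV)"

text \<open>A coefficient G-module: an isometric linear representation of G on the dual
  E = 'f \<Rightarrow>L real of a separable Banach space 'f, by weak-*-continuous operators.\<close>
definition coefficient_module ::
  "('g, 'b) monoid_scheme \<Rightarrow> ('g \<Rightarrow> ('f::banach \<Rightarrow>\<^sub>L real) \<Rightarrow> ('f \<Rightarrow>\<^sub>L real)) \<Rightarrow> bool" where
  "coefficient_module G \<pi> \<longleftrightarrow>
     separable_space (euclidean :: 'f topology) \<and>
     (\<forall>s\<in>carrier G. linear (\<pi> s) \<and> (\<forall>x. norm (\<pi> s x) = norm x) \<and>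
        continuous_map weak_star_topology weak_star_topology (\<pi> s)) \<and>
     \<pi> \<one>\<^bsub>G\<^esub> = id \<and>
     (\<forall>s\<in>carrier G. \<forall>t\<in>carrier G. \<pi> (s \<otimes>\<^bsub>G\<^esub> t) = \<pi> s \<circ> \<pi> t)"

definition mixing ::
  "('g, 'b) monoid_scheme \<Rightarrow> ('g \<Rightarrow> 'e::zero \<Rightarrow> 'e) \<Rightarrow> bool" where
  "mixing G \<pi> \<longleftrightarrow> (\<forall>x. x \<noteq> 0 \<longrightarrow> finite {s\<in>carrier G. \<pi> s x = x})"

text \<open>Points of G^(k) are represented as lists of length k of elements of G.\<close>
definition tuples :: "('g, 'b) monoid_scheme \<Rightarrow> nat \<Rightarrow> 'g list set" where
  "tuples G k = {xs. length xs = k \<and> set xs \<subseteq> carrier G}"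

text \<open>Degree-n cochains: bounded G-equivariant functions on G^(n+1), i.e. elements of
  ell-infinity(G^(n+1),E)^G (only values on tuples G (n+1) matter).\<close>
definition bcochain ::
  "('g, 'b) monoid_scheme \<Rightarrow> ('g \<Rightarrow> 'e::real_normed_vector \<Rightarrow> 'e) \<Rightarrow> nat \<Rightarrow> ('g list \<Rightarrow> 'e) \<Rightarrow> bool" where
  "bcochain G \<pi> n f \<longleftrightarrow>
     (\<exists>B. \<forall>xs\<in>tuples G (Suc n). norm (f xs) \<le> B) \<and>
     (\<forall>g\<in>carrier G. \<forall>xs\<in>tuples G (Suc n). f (map (\<lambda>x. g \<otimes>\<^bsub>G\<^esub> x) xs) = \<pi> g (f xs))"

definition coboundary :: "('g list \<Rightarrow> 'e::real_vector) \<Rightarrow> 'g list \<Rightarrow> 'e" where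
  "coboundary f xs = (\<Sum>i<length xs. ((-1::real) ^ i) *\<^sub>R f (take i xs @ drop (Suc i) xs))"

text \<open>H_b^n(G,E) = 0: every n-cocycle is a coboundary of an (n-1)-cochain
  (for n = 0: every 0-cocycle vanishes, as the complex starts with 0).\<close>
definition bounded_cohomology_trivial ::
  "('g, 'b) monoid_scheme \<Rightarrow> ('g \<Rightarrow> 'e::real_normed_vector \<Rightarrow> 'e) \<Rightarrow> nat \<Rightarrow> bool" where
  "bounded_cohomology_trivial G \<pi> n \<longleftrightarrow>
     (\<forall>f. bcochain G \<pi> n f \<and> (\<forall>xs\<in>tuples G (Suc (Suc n)). coboundary f xs = 0) \<longrightarrow>
        (if n = 0 then (\<forall>xs\<in>tuples G 1. f xs = 0)
         else (\<exists>h. bcochain G \<pi> (n - 1) h \<and>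
                   (\<forall>xs\<in>tuples G (Suc n). f xs = coboundary h xs))))"

end

theory Submission
  imports Defs
begin

text \<open>
  An invariant mean on H averages E-valued functions on H^k, where E is the
  dual of 'f; the result is again in E because averaging happens pointwise on
  vectors of 'f.  Averaging over H^(j+1) the values of a cochain f on the "prism
  simplices" (x_0h_0, ..., x_jh_j, x_j, ..., x_n) gives a homotopy operator S with
    d(S f) = f - A f - S(d f),
  where A f (x) averages f(x_0h_0, ..., x_nh_n) over H^(n+1).  A f (x) is fixed by
  every g with x_i^-1 g x_i in H for all i; by normalishness these g form an infinite
  set, so mixing forces A f = 0, and for a cocycle f we get f = d(S f).  S f is
  bounded and equivariant because the group acts by adjoints of operators on 'f
  (weak-* continuity), which commute with the pointwise means.
\<close>

section \<open>Weak-* continuous operators on a dual space have preduals\<close>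

lemma weak_star_eval_continuous:
  "continuous_map weak_star_topology euclidean
     (\<lambda>y::'f::real_normed_vector \<Rightarrow>\<^sub>L real. blinfun_apply y v)"
proof -
  have "continuous_map weak_star_topology euclidean ((\<lambda>f. f v) \<circ> blinfun_apply)"
    unfolding weak_star_topology_def
    by (rule continuous_map_pullback) (rule continuous_map_product_projection, simp)
  then show ?thesis by (simp add: comp_def)
qed

lemma evaluation_of_finite_kernel:
  fixes \<phi> :: "('f::real_normed_vector \<Rightarrow>\<^sub>L real) \<Rightarrow> real"
  assumes "finite I" "linear \<phi>" "\<forall>y. (\<forall>w\<in>I. blinfun_apply y w = 0) \<longrightarrow> \<phi> y = 0"
  shows "\<exists>u. \<forall>y. \<phi> y = blinfun_apply y u"
  using assms
proof (induction I arbitrary: \<phi> rule: finite_induct)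
  case empty
  then show ?case by (intro exI[of _ 0]) simp
next
  case (insert a I)
  show ?case
  proof (cases "\<exists>y0::'f \<Rightarrow>\<^sub>L real. (\<forall>w\<in>I. blinfun_apply y0 w = 0) \<and> blinfun_apply y0 a \<noteq> 0")
    case True
    then obtain y0 :: "'f \<Rightarrow>\<^sub>L real"
      where y0: "\<forall>w\<in>I. blinfun_apply y0 w = 0" "blinfun_apply y0 a \<noteq> 0" by blast
    define c where "c = \<phi> y0 / blinfun_apply y0 a"
    define \<psi> where "\<psi> = (\<lambda>y. \<phi> y - c * blinfun_apply y a)"
    have lin: "linear \<psi>"
      using insert.prems(1) unfolding \<psi>_def linear_iff
      by (simp add: blinfun.add_left blinfun.scaleR_left algebra_simps)
    have ker: "\<forall>y. (\<forall>w\<in>I. blinfun_apply y w = 0) \<longrightarrow> \<psi> y = 0"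
    proof (intro allI impI)
      fix y :: "'f \<Rightarrow>\<^sub>L real" assume yI: "\<forall>w\<in>I. blinfun_apply y w = 0"
      define z where "z = y - (blinfun_apply y a / blinfun_apply y0 a) *\<^sub>R y0"
      have "\<forall>w\<in>insert a I. blinfun_apply z w = 0"
        using yI y0 by (simp add: z_def blinfun.diff_left blinfun.scaleR_left)
      hence "\<phi> z = 0" using insert.prems(2) by blast
      moreover have "\<phi> z = \<phi> y - (blinfun_apply y a / blinfun_apply y0 a) * \<phi> y0"
        unfolding z_def using insert.prems(1) by (simp add: linear_diff linear_cmul)
      ultimately show "\<psi> y = 0" unfolding \<psi>_def c_def by (simp add: field_simps)
    qed
    obtain u where u: "\<forall>y. \<psi> y = blinfun_apply y u" using insert.IH[OF lin ker] by blast
    show ?thesis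
      by (intro exI[of _ "u + c *\<^sub>R a"])
        (use u in \<open>simp add: \<psi>_def blinfun.add_right blinfun.scaleR_right algebra_simps\<close>)
  next
    case False
    then have "\<forall>y. (\<forall>w\<in>I. blinfun_apply y w = 0) \<longrightarrow> \<phi> y = 0"
      using insert.prems(2) by auto
    then show ?thesis using insert.IH[OF insert.prems(1)] by blast
  qed
qed

text \<open>A weak-* continuous linear functional is bounded by 1 on a basic weak-*
  neighbourhood of 0, which only constrains finitely many evaluations; by linearity
  it then vanishes on their joint kernel.\<close>
lemma weak_star_continuous_finite_kernel:
  fixes \<phi> :: "('f::real_normed_vector \<Rightarrow>\<^sub>L real) \<Rightarrow> real"
  assumes lin: "linear \<phi>" and cont: "continuous_map weak_star_topology euclidean \<phi>"
  obtains I where "finite I" "\<forall>y. (\<forall>w\<in>I. blinfun_apply y w = 0) \<longrightarrow> \<phi> y = 0"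
proof -
  have "topspace (weak_star_topology :: ('f \<Rightarrow>\<^sub>L real) topology) = UNIV"
    by (simp add: weak_star_topology_def topspace_pullback_topology)
  then have "openin weak_star_topology {y. \<phi> y \<in> {-1<..<1}}"
    using openin_continuous_map_preimage[OF cont, of "{-1<..<1}"] by simp
  then obtain U where U: "openin (product_topology (\<lambda>_. euclidean) UNIV) U"
       "{y. \<phi> y \<in> {-1<..<1}} = blinfun_apply -` U"
    unfolding weak_star_topology_def openin_pullback_topology by auto
  have "\<phi> 0 = 0" using lin by (simp add: linear_0)
  then have "blinfun_apply 0 \<in> U" using U(2) by auto
  then obtain X where X: "blinfun_apply 0 \<in> (\<Pi>\<^sub>E i\<in>UNIV. X i)"
     "finite {i. X i \<noteq> topspace euclidean}" "(\<Pi>\<^sub>E i\<in>UNIV. X i) \<subseteq> U"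
    using product_topology_open_contains_basis[OF U(1)] by blast
  define I where "I = {i. X i \<noteq> UNIV}"
  have "\<phi> y = 0" if yI: "\<forall>w\<in>I. blinfun_apply y w = 0" for y
  proof -
    have small: "\<bar>t * \<phi> y\<bar> < 1" for t
    proof -
      have "t * blinfun_apply y i \<in> X i" for i
        using yI X(1) by (cases "i \<in> I") (auto simp: I_def PiE_def Pi_def)
      then have "blinfun_apply (t *\<^sub>R y) \<in> (\<Pi>\<^sub>E i\<in>UNIV. X i)"
        by (simp add: PiE_def Pi_def blinfun.scaleR_left)
      then have "t *\<^sub>R y \<in> {y. \<phi> y \<in> {-1<..<1}}" using X(3) U(2) by blast
      then show ?thesis using lin by (simp add: linear_cmul abs_less_iff)
    qed
    show "\<phi> y = 0"
      using small[of "1 / \<phi> y"] by (cases "\<phi> y = 0") simp_all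
  qed
  moreover have "finite I" using X(2) by (simp add: I_def)
  ultimately show thesis using that by blast
qed

lemma weak_star_continuous_functional_is_evaluation:
  fixes \<phi> :: "('f::real_normed_vector \<Rightarrow>\<^sub>L real) \<Rightarrow> real"
  assumes "linear \<phi>" "continuous_map weak_star_topology euclidean \<phi>"
  shows "\<exists>u. \<forall>y. \<phi> y = blinfun_apply y u"
  using weak_star_continuous_finite_kernel[OF assms] evaluation_of_finite_kernel[OF _ assms(1)]
  by metis

text \<open>The operators by which G acts: isometries of the dual that are adjoints of
  operators on 'f (each evaluation of T y is an evaluation of y).\<close>
definition dual_isometry :: "(('f::real_normed_vector \<Rightarrow>\<^sub>L real) \<Rightarrow> ('f \<Rightarrow>\<^sub>L real)) \<Rightarrow> bool" where
  "dual_isometry T \<longleftrightarrow> linear T \<and> (\<forall>y. norm (T y) = norm y) \<and>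
     (\<forall>v. \<exists>u. \<forall>y. blinfun_apply (T y) v = blinfun_apply y u)"

lemma coefficient_module_dual_isometry:
  assumes "coefficient_module G \<pi>" "s \<in> carrier G"
  shows "dual_isometry (\<pi> s)"
proof -
  have lin: "linear (\<pi> s)" and cont: "continuous_map weak_star_topology weak_star_topology (\<pi> s)"
    and iso: "\<forall>y. norm (\<pi> s y) = norm y"
    using assms unfolding coefficient_module_def by blast+
  have "\<exists>u. \<forall>y. blinfun_apply (\<pi> s y) v = blinfun_apply y u" for v
  proof (rule weak_star_continuous_functional_is_evaluation)
    show "linear (\<lambda>y. blinfun_apply (\<pi> s y) v)"
      using lin unfolding linear_iff by (simp add: blinfun.add_left blinfun.scaleR_left)
    show "continuous_map weak_star_topology euclidean (\<lambda>y. blinfun_apply (\<pi> s y) v)"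
      using continuous_map_compose[OF cont weak_star_eval_continuous[of v]] by (simp add: comp_def)
  qed
  then show ?thesis using lin iso unfolding dual_isometry_def by blast
qed

definition omit :: "nat \<Rightarrow> 'a list \<Rightarrow> 'a list" where
  "omit i xs = take i xs @ drop (Suc i) xs"

lemma coboundary_omit:
  "coboundary f xs = (\<Sum>i<length xs. ((-1::real) ^ i) *\<^sub>R f (omit i xs))"
  by (simp add: coboundary_def omit_def)

lemma omit_Cons_0 [simp]: "omit 0 (h # hs) = hs"
  by (simp add: omit_def)

lemma omit_Cons_Suc [simp]: "omit (Suc i) (h # hs) = h # omit i hs"
  by (simp add: omit_def)

lemma omit_append_left: "i < length A \<Longrightarrow> omit i (A @ B) = omit i A @ B"
  by (simp add: omit_def)

lemma omit_append_right: "length A \<le> i \<Longrightarrow> omit i (A @ B) = A @ omit (i - length A) B"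
  by (simp add: omit_def Suc_diff_le)

lemma take_omit: "k \<le> i \<Longrightarrow> take k (omit i xs) = take k xs"
  by (simp add: omit_def) linarith

lemma drop_omit_before: "j \<le> i \<Longrightarrow> drop j (omit i xs) = omit (i - j) (drop j xs)"
  by (cases "length xs \<le> i") (auto simp: omit_def drop_take Suc_diff_le min_def)

lemma drop_omit_after: "i \<le> j \<Longrightarrow> i < length xs \<Longrightarrow> drop j (omit i xs) = drop (Suc j) xs"
  by (simp add: omit_def)

lemma omit_take: "i < k \<Longrightarrow> omit i (take k xs) = take (k - 1) (omit i xs)"
proof -
  assume "i < k"
  then obtain k' where "k = Suc k'" "i \<le> k'" by (cases k) auto
  then show ?thesis by (cases "length xs \<le> i") (auto simp: omit_def take_drop min_def)
qed

lemma length_omit: "i < length xs \<Longrightarrow> length (omit i xs) = length xs - 1"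
  by (simp add: omit_def)

lemma set_omit: "set (omit i xs) \<subseteq> set xs"
  by (auto simp: omit_def dest: in_set_takeD in_set_dropD)

lemma omit_in_tuples: "xs \<in> tuples G (Suc k) \<Longrightarrow> i < Suc k \<Longrightarrow> omit i xs \<in> tuples G k"
  using set_omit[of i xs] by (auto simp: tuples_def length_omit)

section \<open>Invariant means on a subgroup\<close>

locale invariant_mean =
  fixes G :: "('g, 'b) monoid_scheme" and H :: "'g set" and m :: "('g \<Rightarrow> real) \<Rightarrow> real"
  assumes group: "group G" and subgroup: "subgroup H G"
    and mean_cong: "\<And>f f'. (\<forall>x\<in>H. f x = f' x) \<Longrightarrow> m f = m f'"
    and mean_linear: "\<And>f g a b. bdd_on H f \<Longrightarrow> bdd_on H g \<Longrightarrow>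
           m (\<lambda>x. a * f x + b * g x) = a * m f + b * m g"
    and mean_nonneg: "\<And>f. bdd_on H f \<Longrightarrow> (\<forall>x\<in>H. f x \<ge> 0) \<Longrightarrow> m f \<ge> 0"
    and mean_one: "m (\<lambda>_. 1) = 1"
    and mean_invariant: "\<And>f h. bdd_on H f \<Longrightarrow> h \<in> H \<Longrightarrow> m (\<lambda>x. f (h \<otimes>\<^bsub>G\<^esub> x)) = m f"

lemma amenable_subgroup_invariant_mean:
  assumes "group G" "amenable_subgroup G H"
  obtains m where "invariant_mean G H m"
proof -
  from assms(2) obtain m where "subgroup H G"
    "\<forall>f f'. (\<forall>x\<in>H. f x = f' x) \<longrightarrow> m f = m f'"
    "\<forall>f g a b. bdd_on H f \<and> bdd_on H g \<longrightarrow> m (\<lambda>x. a * f x + b * g x) = a * m f + b * m g"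
    "\<forall>f. bdd_on H f \<and> (\<forall>x\<in>H. f x \<ge> 0) \<longrightarrow> m f \<ge> 0" "m (\<lambda>_. 1) = 1"
    "\<forall>f h. bdd_on H f \<and> h \<in> H \<longrightarrow> m (\<lambda>x. f (h \<otimes>\<^bsub>G\<^esub> x)) = m f"
    unfolding amenable_subgroup_def by blast
  then have "invariant_mean G H m"
    using assms(1) by (simp add: invariant_mean_def)
  then show thesis by (rule that)
qed

lemma blinfun_apply_abs_le: "norm y \<le> B \<Longrightarrow> \<bar>blinfun_apply y v\<bar> \<le> B * norm v"
  using norm_blinfun[of y v] by (simp add: mult_right_mono order_trans)

context invariant_mean
begin

lemma H_subset: "H \<subseteq> carrier G"
  using subgroup by (rule subgroup.subset)

lemma mean_const: "m (\<lambda>_. c) = c"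
proof -
  have "bdd_on H (\<lambda>_. d)" for d unfolding bdd_on_def by blast
  then have "m (\<lambda>x. c * 1 + 0 * 1) = c * m (\<lambda>_. 1) + 0 * m (\<lambda>_. 1)"
    by (intro mean_linear)
  then show ?thesis using mean_one by simp
qed

lemma mean_add: "bdd_on H f \<Longrightarrow> bdd_on H g \<Longrightarrow> m (\<lambda>x. f x + g x) = m f + m g"
  using mean_linear[of f g 1 1] by simp

lemma mean_scale: "bdd_on H f \<Longrightarrow> m (\<lambda>x. a * f x) = a * m f"
  using mean_linear[of f f a 0] by simp

text \<open>Positivity makes the mean a contraction for the sup-norm.\<close>
lemma mean_abs_le:
  assumes "\<forall>x\<in>H. \<bar>f x\<bar> \<le> B"
  shows "\<bar>m f\<bar> \<le> B"
proof -
  have bf: "bdd_on H f" using assms unfolding bdd_on_def by blast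
  have bc: "bdd_on H (\<lambda>_. 1)" unfolding bdd_on_def by blast
  have shift: "m (\<lambda>x. B * 1 + s * f x) = B + s * m f" for s
    using mean_linear[OF bc bf, of B s] mean_one by simp
  have "m (\<lambda>x. B * 1 + (-1) * f x) \<ge> 0"
    by (rule mean_nonneg) (use assms in \<open>auto simp: bdd_on_def abs_le_iff intro!: exI[of _ "2 * \<bar>B\<bar>"]\<close>)
  moreover have "m (\<lambda>x. B * 1 + 1 * f x) \<ge> 0"
    by (rule mean_nonneg) (use assms in \<open>auto simp: bdd_on_def abs_le_iff intro!: exI[of _ "2 * \<bar>B\<bar>"]\<close>)
  ultimately show ?thesis unfolding shift by (simp add: abs_le_iff)
qed

end

section \<open>Means of dual-valued functions\<close>

context invariant_mean
begin

definition dual_mean :: "('g \<Rightarrow> ('f::real_normed_vector \<Rightarrow>\<^sub>L real)) \<Rightarrow> ('f \<Rightarrow>\<^sub>L real)" where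
  "dual_mean F = Blinfun (\<lambda>v. m (\<lambda>h. blinfun_apply (F h) v))"

lemma bdd_on_eval:
  "\<forall>h\<in>H. norm (F h) \<le> B \<Longrightarrow> bdd_on H (\<lambda>h. blinfun_apply (F h) v)"
  unfolding bdd_on_def by (blast intro: blinfun_apply_abs_le)

lemma dual_mean_apply:
  fixes F :: "'g \<Rightarrow> ('f::real_normed_vector \<Rightarrow>\<^sub>L real)"
  assumes B: "\<forall>h\<in>H. norm (F h) \<le> B"
  shows "blinfun_apply (dual_mean F) v = m (\<lambda>h. blinfun_apply (F h) v)"
proof -
  have "bounded_linear (\<lambda>v. m (\<lambda>h. blinfun_apply (F h) v))"
  proof (rule bounded_linear_intro[where K=B])
    fix x y
    show "m (\<lambda>h. blinfun_apply (F h) (x + y))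
        = m (\<lambda>h. blinfun_apply (F h) x) + m (\<lambda>h. blinfun_apply (F h) y)"
      using mean_add[OF bdd_on_eval[OF B] bdd_on_eval[OF B]] by (simp add: blinfun.add_right)
  next
    fix r x
    show "m (\<lambda>h. blinfun_apply (F h) (r *\<^sub>R x)) = r *\<^sub>R m (\<lambda>h. blinfun_apply (F h) x)"
      using mean_scale[OF bdd_on_eval[OF B]] by (simp add: blinfun.scaleR_right)
  next
    fix x
    have "\<bar>m (\<lambda>h. blinfun_apply (F h) x)\<bar> \<le> B * norm x"
      using B by (intro mean_abs_le) (blast intro: blinfun_apply_abs_le)
    then show "norm (m (\<lambda>h. blinfun_apply (F h) x)) \<le> norm x * B"
      by (simp add: mult.commute)
  qed
  then show ?thesis unfolding dual_mean_def by (simp add: bounded_linear_Blinfun_apply)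
qed

lemma dual_mean_norm:
  fixes F :: "'g \<Rightarrow> ('f::real_normed_vector \<Rightarrow>\<^sub>L real)"
  assumes B: "\<forall>h\<in>H. norm (F h) \<le> B"
  shows "norm (dual_mean F) \<le> B"
proof (rule norm_blinfun_bound)
  show "0 \<le> B"
    using B subgroup.one_closed[OF subgroup] norm_ge_zero order_trans by blast
  show "norm (blinfun_apply (dual_mean F) x) \<le> B * norm x" for x
    unfolding dual_mean_apply[OF B] real_norm_def
    using B by (intro mean_abs_le) (blast intro: blinfun_apply_abs_le)
qed

lemma dual_mean_cong: "\<forall>h\<in>H. F h = F' h \<Longrightarrow> dual_mean F = dual_mean F'"
  unfolding dual_mean_def by (metis (mono_tags, lifting) mean_cong)

lemma dual_mean_const: "dual_mean (\<lambda>_. c) = c"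
  by (rule blinfun_eqI) (simp add: dual_mean_apply[where B="norm c"] mean_const)

lemma dual_mean_add:
  fixes F F' :: "'g \<Rightarrow> ('f::real_normed_vector \<Rightarrow>\<^sub>L real)"
  assumes B: "\<forall>h\<in>H. norm (F h) \<le> B" and B': "\<forall>h\<in>H. norm (F' h) \<le> B'"
  shows "dual_mean (\<lambda>h. F h + F' h) = dual_mean F + dual_mean F'"
proof (rule blinfun_eqI)
  fix v
  have B2: "\<forall>h\<in>H. norm (F h + F' h) \<le> B + B'"
    using B B' by (meson add_mono norm_triangle_le)
  show "blinfun_apply (dual_mean (\<lambda>h. F h + F' h)) v = blinfun_apply (dual_mean F + dual_mean F') v"
    by (simp add: dual_mean_apply[OF B2] dual_mean_apply[OF B] dual_mean_apply[OF B'] blinfun.add_left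
        mean_add[OF bdd_on_eval[OF B] bdd_on_eval[OF B']])
qed

lemma dual_mean_scale:
  fixes F :: "'g \<Rightarrow> ('f::real_normed_vector \<Rightarrow>\<^sub>L real)"
  assumes B: "\<forall>h\<in>H. norm (F h) \<le> B"
  shows "dual_mean (\<lambda>h. c *\<^sub>R F h) = c *\<^sub>R dual_mean F"
proof (rule blinfun_eqI)
  fix v
  have B2: "\<forall>h\<in>H. norm (c *\<^sub>R F h) \<le> \<bar>c\<bar> * B"
    using B by (simp add: mult_left_mono)
  show "blinfun_apply (dual_mean (\<lambda>h. c *\<^sub>R F h)) v = blinfun_apply (c *\<^sub>R dual_mean F) v"
    by (simp add: dual_mean_apply[OF B2] dual_mean_apply[OF B] blinfun.scaleR_left mean_scale[OF bdd_on_eval[OF B]])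
qed

lemma dual_mean_translate:
  fixes F :: "'g \<Rightarrow> ('f::real_normed_vector \<Rightarrow>\<^sub>L real)"
  assumes B: "\<forall>h\<in>H. norm (F h) \<le> B" and a: "a \<in> H"
  shows "dual_mean (\<lambda>h. F (a \<otimes>\<^bsub>G\<^esub> h)) = dual_mean F"
proof (rule blinfun_eqI)
  fix v
  have B2: "\<forall>h\<in>H. norm (F (a \<otimes>\<^bsub>G\<^esub> h)) \<le> B"
    using B a subgroup by (simp add: subgroup.m_closed)
  show "blinfun_apply (dual_mean (\<lambda>h. F (a \<otimes>\<^bsub>G\<^esub> h))) v = blinfun_apply (dual_mean F) v"
    using mean_invariant[OF bdd_on_eval[OF B] a] by (simp add: dual_mean_apply[OF B2] dual_mean_apply[OF B])
qed

lemma dual_isometry_dual_mean: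
  fixes F :: "'g \<Rightarrow> ('f::real_normed_vector \<Rightarrow>\<^sub>L real)"
  assumes B: "\<forall>h\<in>H. norm (F h) \<le> B" and T: "dual_isometry T"
  shows "T (dual_mean F) = dual_mean (\<lambda>h. T (F h))"
proof (rule blinfun_eqI)
  fix v
  obtain u where u: "\<forall>y. blinfun_apply (T y) v = blinfun_apply y u"
    using T unfolding dual_isometry_def by blast
  have B2: "\<forall>h\<in>H. norm (T (F h)) \<le> B" using B T by (simp add: dual_isometry_def)
  show "blinfun_apply (T (dual_mean F)) v = blinfun_apply (dual_mean (\<lambda>h. T (F h))) v"
    by (simp add: u dual_mean_apply[OF B2] dual_mean_apply[OF B])
qed

end

context invariant_mean
begin

text \<open>iter_mean k F averages F over lists of length k with entries in H, one
  coordinate after the other (the first coordinate outermost).\<close>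
fun iter_mean :: "nat \<Rightarrow> ('g list \<Rightarrow> ('f::real_normed_vector \<Rightarrow>\<^sub>L real)) \<Rightarrow> ('f \<Rightarrow>\<^sub>L real)" where
  "iter_mean 0 F = F []"
| "iter_mean (Suc k) F = dual_mean (\<lambda>h. iter_mean k (\<lambda>hs. F (h # hs)))"

definition H_bounded :: "nat \<Rightarrow> ('g list \<Rightarrow> ('f::real_normed_vector \<Rightarrow>\<^sub>L real)) \<Rightarrow> real \<Rightarrow> bool" where
  "H_bounded k F B \<longleftrightarrow> (\<forall>hs. length hs = k \<and> set hs \<subseteq> H \<longrightarrow> norm (F hs) \<le> B)"

lemma H_bounded_Cons: "H_bounded (Suc k) F B \<Longrightarrow> h \<in> H \<Longrightarrow> H_bounded k (\<lambda>hs. F (h # hs)) B"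
  unfolding H_bounded_def by auto

lemma H_bounded_comp:
  assumes "\<And>hs. length hs = k \<Longrightarrow> set hs \<subseteq> H \<Longrightarrow> \<Phi> hs \<in> tuples G l"
    and "\<forall>xs\<in>tuples G l. norm (f xs) \<le> B"
  shows "H_bounded k (\<lambda>hs. f (\<Phi> hs)) B"
  using assms unfolding H_bounded_def by blast

lemma iter_mean_norm: "H_bounded k F B \<Longrightarrow> norm (iter_mean k F) \<le> B"
proof (induction k arbitrary: F)
  case 0
  then show ?case by (simp add: H_bounded_def)
next
  case (Suc k)
  then show ?case by (auto intro!: dual_mean_norm dest: H_bounded_Cons)
qed

lemma iter_mean_Cons_bounded:
  "H_bounded (Suc k) F B \<Longrightarrow> \<forall>h\<in>H. norm (iter_mean k (\<lambda>hs. F (h # hs))) \<le> B"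
  by (auto intro!: iter_mean_norm dest: H_bounded_Cons)

lemma iter_mean_cong:
  "(\<And>hs. length hs = k \<Longrightarrow> set hs \<subseteq> H \<Longrightarrow> F hs = F' hs) \<Longrightarrow> iter_mean k F = iter_mean k F'"
proof (induction k arbitrary: F F')
  case 0
  then show ?case by simp
next
  case (Suc k)
  show ?case
    unfolding iter_mean.simps by (rule dual_mean_cong) (auto intro!: Suc.IH Suc.prems)
qed

lemma iter_mean_const: "iter_mean k (\<lambda>_. c) = c"
  by (induction k) (simp_all add: dual_mean_const)

lemma iter_mean_add:
  "H_bounded k F B \<Longrightarrow> H_bounded k F' B' \<Longrightarrow>
     iter_mean k (\<lambda>hs. F hs + F' hs) = iter_mean k F + iter_mean k F'"
proof (induction k arbitrary: F F')
  case 0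
  then show ?case by simp
next
  case (Suc k)
  have "iter_mean (Suc k) (\<lambda>hs. F hs + F' hs)
      = dual_mean (\<lambda>h. iter_mean k (\<lambda>hs. F (h # hs)) + iter_mean k (\<lambda>hs. F' (h # hs)))"
    unfolding iter_mean.simps
    by (rule dual_mean_cong) (use Suc in \<open>auto intro!: Suc.IH dest: H_bounded_Cons\<close>)
  also have "\<dots> = iter_mean (Suc k) F + iter_mean (Suc k) F'"
    unfolding iter_mean.simps
    by (rule dual_mean_add[OF iter_mean_Cons_bounded iter_mean_Cons_bounded]) (use Suc.prems in auto)
  finally show ?case .
qed

lemma iter_mean_scale: "H_bounded k F B \<Longrightarrow> iter_mean k (\<lambda>hs. c *\<^sub>R F hs) = c *\<^sub>R iter_mean k F"
proof (induction k arbitrary: F)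
  case 0
  then show ?case by simp
next
  case (Suc k)
  have "iter_mean (Suc k) (\<lambda>hs. c *\<^sub>R F hs) = dual_mean (\<lambda>h. c *\<^sub>R iter_mean k (\<lambda>hs. F (h # hs)))"
    unfolding iter_mean.simps
    by (rule dual_mean_cong) (use Suc in \<open>auto intro!: Suc.IH dest: H_bounded_Cons\<close>)
  also have "\<dots> = c *\<^sub>R iter_mean (Suc k) F"
    unfolding iter_mean.simps by (rule dual_mean_scale[OF iter_mean_Cons_bounded[OF Suc.prems]])
  finally show ?case .
qed

lemma iter_mean_lincomb:
  assumes "finite I" "\<forall>i\<in>I. H_bounded k (F i) B"
  shows "iter_mean k (\<lambda>hs. \<Sum>i\<in>I. c i *\<^sub>R F i hs) = (\<Sum>i\<in>I. c i *\<^sub>R iter_mean k (F i))"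
  using assms
proof (induction I rule: finite_induct)
  case empty
  then show ?case by (simp add: iter_mean_const)
next
  case (insert a I)
  have scaled: "H_bounded k (\<lambda>hs. c i *\<^sub>R F i hs) (\<bar>c i\<bar> * B)" if "i \<in> insert a I" for i
    using insert.prems that unfolding H_bounded_def by (auto intro: mult_left_mono)
  then have "H_bounded k (\<lambda>hs. \<Sum>i\<in>I. c i *\<^sub>R F i hs) (\<Sum>i\<in>I. \<bar>c i\<bar> * B)"
    unfolding H_bounded_def by (auto intro!: sum_norm_le)
  then have "iter_mean k (\<lambda>hs. c a *\<^sub>R F a hs + (\<Sum>i\<in>I. c i *\<^sub>R F i hs))
      = c a *\<^sub>R iter_mean k (F a) + iter_mean k (\<lambda>hs. \<Sum>i\<in>I. c i *\<^sub>R F i hs)"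
    using insert.prems scaled[of a]
    by (simp add: iter_mean_add[where B="\<bar>c a\<bar> * B"] iter_mean_scale[where B=B])
  then show ?case using insert by simp
qed

lemma iter_mean_omit:
  "i \<le> k \<Longrightarrow> H_bounded k F B \<Longrightarrow> iter_mean (Suc k) (\<lambda>hs. F (omit i hs)) = iter_mean k F"
proof (induction k arbitrary: i F)
  case 0
  then show ?case by (simp add: dual_mean_const)
next
  case (Suc k)
  show ?case
  proof (cases i)
    case 0
    then have "iter_mean (Suc (Suc k)) (\<lambda>hs. F (omit i hs)) = dual_mean (\<lambda>h. iter_mean (Suc k) F)"
      by (subst iter_mean.simps(2)) simp
    then show ?thesis by (simp only: dual_mean_const)
  next
    case (Suc i')
    have "iter_mean (Suc (Suc k)) (\<lambda>hs. F (omit i hs))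
        = dual_mean (\<lambda>h. iter_mean (Suc k) (\<lambda>hs. F (h # omit i' hs)))"
      by (subst iter_mean.simps(2)) (simp only: Suc omit_Cons_Suc)
    also have "\<dots> = dual_mean (\<lambda>h. iter_mean k (\<lambda>hs. F (h # hs)))"
      using Suc.prems \<open>i = Suc i'\<close> by (intro dual_mean_cong ballI Suc.IH) (auto dest: H_bounded_Cons)
    finally show ?thesis by simp
  qed
qed

lemma iter_mean_translate:
  "length as = k \<Longrightarrow> set as \<subseteq> H \<Longrightarrow> H_bounded k F B \<Longrightarrow>
     iter_mean k (\<lambda>hs. F (map2 (\<otimes>\<^bsub>G\<^esub>) as hs)) = iter_mean k F"
proof (induction k arbitrary: as F)
  case 0
  then show ?case by simp
next
  case (Suc k)
  then obtain a as' where as: "as = a # as'" "a \<in> H" "set as' \<subseteq> H" "length as' = k"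
    by (cases as) auto
  have "iter_mean (Suc k) (\<lambda>hs. F (map2 (\<otimes>\<^bsub>G\<^esub>) as hs))
      = dual_mean (\<lambda>h. iter_mean k (\<lambda>hs. F ((a \<otimes>\<^bsub>G\<^esub> h) # map2 (\<otimes>\<^bsub>G\<^esub>) as' hs)))"
    by (simp add: as)
  also have "\<dots> = dual_mean (\<lambda>h. iter_mean k (\<lambda>hs. F ((a \<otimes>\<^bsub>G\<^esub> h) # hs)))"
    using as Suc.prems(3)
    by (intro dual_mean_cong ballI Suc.IH) (auto intro: H_bounded_Cons subgroup.m_closed[OF subgroup])
  also have "\<dots> = dual_mean (\<lambda>h. iter_mean k (\<lambda>hs. F (h # hs)))"
    using dual_mean_translate[OF iter_mean_Cons_bounded[OF Suc.prems(3)] as(2)] .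
  finally show ?case by simp
qed

lemma dual_isometry_iter_mean:
  assumes "H_bounded k F B" "dual_isometry T"
  shows "T (iter_mean k F) = iter_mean k (\<lambda>hs. T (F hs))"
  using assms(1)
proof (induction k arbitrary: F)
  case 0
  then show ?case by simp
next
  case (Suc k)
  have "T (iter_mean (Suc k) F) = dual_mean (\<lambda>h. T (iter_mean k (\<lambda>hs. F (h # hs))))"
    by (simp add: dual_isometry_dual_mean[OF iter_mean_Cons_bounded[OF Suc.prems] assms(2)])
  also have "\<dots> = iter_mean (Suc k) (\<lambda>hs. T (F hs))"
    by (simp, rule dual_mean_cong) (use Suc in \<open>auto dest: H_bounded_Cons\<close>)
  finally show ?case .
qed

end

section \<open>Prism simplices\<close>

lemma omit_map2:
  "length xs = length ys \<Longrightarrow> omit i (map2 f xs ys) = map2 f (omit i xs) (omit i ys)"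
proof (induction xs ys arbitrary: i rule: list_induct2)
  case Nil
  then show ?case by (simp add: omit_def)
next
  case (Cons x xs y ys)
  then show ?case by (cases i) simp_all
qed

lemma (in group) conjugate_mult:
  assumes "g \<in> carrier G" "t \<in> carrier G" "h \<in> carrier G"
  shows "t \<otimes> ((inv t \<otimes> g \<otimes> t) \<otimes> h) = g \<otimes> (t \<otimes> h)"
proof -
  have "t \<otimes> (inv t \<otimes> y) = y" if "y \<in> carrier G" for y
    using assms(2) that by (simp add: m_assoc[symmetric])
  then show ?thesis using assms by (simp add: m_assoc)
qed

context invariant_mean
begin

text \<open>For x = (x_0, ..., x_n) and hs = (h_0, h_1, ...):
    prism x j hs = (x_0h_0, ..., x_jh_j, x_j, ..., x_n),  of length n + 2,
    twist x k hs = (x_0h_0, ..., x_(k-1)h_(k-1), x_k, ..., x_n),  of length n + 1.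
  The prisms are the simplices of the standard triangulation of the prism between x
  and its twist by hs; the identities below describe their faces.\<close>
definition prism :: "'g list \<Rightarrow> nat \<Rightarrow> 'g list \<Rightarrow> 'g list" where
  "prism x j hs = map2 (\<otimes>\<^bsub>G\<^esub>) (take (Suc j) x) hs @ drop j x"

definition twist :: "'g list \<Rightarrow> nat \<Rightarrow> 'g list \<Rightarrow> 'g list" where
  "twist x k hs = map2 (\<otimes>\<^bsub>G\<^esub>) (take k x) hs @ drop k x"

lemma length_prism: "j < length x \<Longrightarrow> length hs = Suc j \<Longrightarrow> length (prism x j hs) = Suc (length x)"
  by (simp add: prism_def)

lemma prism_omit_high:
  "j < i \<Longrightarrow> i < length x \<Longrightarrow> length hs = Suc j \<Longrightarrow>
     prism (omit i x) j hs = omit (Suc i) (prism x j hs)"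
  unfolding prism_def by (subst omit_append_right) (simp_all add: take_omit drop_omit_before)

lemma omit_prism_low:
  "i \<le> j \<Longrightarrow> Suc j < length x \<Longrightarrow> length hs = Suc (Suc j) \<Longrightarrow>
     omit i (prism x (Suc j) hs) = prism (omit i x) j (omit i hs)"
  unfolding prism_def
  by (subst omit_append_left) (simp_all add: omit_map2 omit_take drop_omit_after)

lemma omit_prism_diagonal:
  "j < length x \<Longrightarrow> length hs = Suc j \<Longrightarrow> omit j (prism x j hs) = twist x j (omit j hs)"
  unfolding prism_def twist_def
  by (subst omit_append_left) (simp_all add: omit_map2 omit_take take_omit)

lemma omit_prism_next:
  "j < length x \<Longrightarrow> length hs = Suc j \<Longrightarrow> omit (Suc j) (prism x j hs) = twist x (Suc j) hs"
  unfolding prism_def twist_def by (subst omit_append_right) (simp_all add: omit_def)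

lemma map2_mult_in_carrier:
  "set xs \<subseteq> carrier G \<Longrightarrow> set hs \<subseteq> H \<Longrightarrow> set (map2 (\<otimes>\<^bsub>G\<^esub>) xs hs) \<subseteq> carrier G"
  using H_subset group.is_monoid[OF group]
  by (auto dest: set_zip_leftD set_zip_rightD intro!: monoid.m_closed)

lemma prism_in_tuples:
  "set x \<subseteq> carrier G \<Longrightarrow> j < length x \<Longrightarrow> length hs = Suc j \<Longrightarrow> set hs \<subseteq> H \<Longrightarrow>
     prism x j hs \<in> tuples G (Suc (length x))"
  using map2_mult_in_carrier[of "take (Suc j) x" hs]
  by (auto simp: prism_def tuples_def dest: in_set_takeD in_set_dropD)

lemma twist_in_tuples:
  "set x \<subseteq> carrier G \<Longrightarrow> k \<le> length x \<Longrightarrow> length hs = k \<Longrightarrow> set hs \<subseteq> H \<Longrightarrow>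
     twist x k hs \<in> tuples G (length x)"
  using map2_mult_in_carrier[of "take k x" hs]
  by (auto simp: twist_def tuples_def dest: in_set_takeD in_set_dropD)

lemma map_mult_prism:
  assumes "g \<in> carrier G" "set x \<subseteq> carrier G" "set hs \<subseteq> H"
  shows "map (\<lambda>y. g \<otimes>\<^bsub>G\<^esub> y) (prism x j hs) = prism (map (\<lambda>y. g \<otimes>\<^bsub>G\<^esub> y) x) j hs"
proof -
  have "g \<otimes>\<^bsub>G\<^esub> (a \<otimes>\<^bsub>G\<^esub> b) = g \<otimes>\<^bsub>G\<^esub> a \<otimes>\<^bsub>G\<^esub> b" if "a \<in> carrier G" "b \<in> carrier G" for a b
    using that assms(1) by (simp add: group.is_monoid[OF group] monoid.m_assoc)
  then have "map (\<lambda>y. g \<otimes>\<^bsub>G\<^esub> y) (map2 (\<otimes>\<^bsub>G\<^esub>) xs hs) = map2 (\<otimes>\<^bsub>G\<^esub>) (map (\<lambda>y. g \<otimes>\<^bsub>G\<^esub> y) xs) hs"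
    if "set xs \<subseteq> carrier G" for xs
    using that assms(3) H_subset by (auto simp: map_zip_map intro!: map_cong elim!: in_set_zipE) blast
  moreover have "set (take (Suc j) x) \<subseteq> carrier G"
    using assms(2) by (meson order_trans set_take_subset)
  ultimately show ?thesis unfolding prism_def by (simp add: take_map drop_map)
qed

text \<open>Left multiplication by g amounts to right multiplication of each x_i by the
  conjugate x_i^-1 g x_i: g x_i h_i = x_i ((x_i^-1 g x_i) h_i).\<close>
lemma map_mult_conjugate:
  assumes "g \<in> carrier G" "set x \<subseteq> carrier G" "set hs \<subseteq> carrier G"
  shows "map (\<lambda>y. g \<otimes>\<^bsub>G\<^esub> y) (map2 (\<otimes>\<^bsub>G\<^esub>) x hs)
       = map2 (\<otimes>\<^bsub>G\<^esub>) x (map2 (\<otimes>\<^bsub>G\<^esub>) (map (\<lambda>t. inv\<^bsub>G\<^esub> t \<otimes>\<^bsub>G\<^esub> g \<otimes>\<^bsub>G\<^esub> t) x) hs)"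
  using assms(2,3)
proof (induction x arbitrary: hs)
  case Nil
  then show ?case by simp
next
  case (Cons t x)
  then show ?case
  proof (cases hs)
    case (Cons h hs')
    have "g \<otimes>\<^bsub>G\<^esub> (t \<otimes>\<^bsub>G\<^esub> h) = t \<otimes>\<^bsub>G\<^esub> ((inv\<^bsub>G\<^esub> t \<otimes>\<^bsub>G\<^esub> g \<otimes>\<^bsub>G\<^esub> t) \<otimes>\<^bsub>G\<^esub> h)"
      using Cons.prems assms(1) \<open>hs = h # hs'\<close> by (simp add: group.conjugate_mult[OF group])
    then show ?thesis using Cons.IH[of hs'] Cons.prems \<open>hs = h # hs'\<close> by simp
  qed simp
qed

end

section \<open>The prism identity\<close>

lemma sum_split_pair:
  fixes a :: "nat \<Rightarrow> 'v::comm_monoid_add"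
  assumes "j < Suc n"
  shows "(\<Sum>i<Suc (Suc n). a i)
       = (\<Sum>i<j. a i) + (a j + (a (Suc j) + (\<Sum>i\<in>{Suc (Suc j)..<Suc (Suc n)}. a i)))"
proof -
  have "(\<Sum>i<Suc (Suc n). a i) = (\<Sum>i<j. a i) + (\<Sum>i\<in>{j..<Suc (Suc n)}. a i)"
    unfolding atLeast0LessThan[symmetric]
    using assms by (intro sum.atLeastLessThan_concat[symmetric]) simp_all
  also have "(\<Sum>i\<in>{j..<Suc (Suc n)}. a i) = a j + (\<Sum>i\<in>{Suc j..<Suc (Suc n)}. a i)"
    using assms by (intro sum.atLeast_Suc_lessThan) simp
  also have "(\<Sum>i\<in>{Suc j..<Suc (Suc n)}. a i) = a (Suc j) + (\<Sum>i\<in>{Suc (Suc j)..<Suc (Suc n)}. a i)"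
    using assms by (intro sum.atLeast_Suc_lessThan) simp
  finally show ?thesis .
qed

text \<open>The cancellation pattern of the faces of the triangulated prism, for abstract
  coefficients: a j i is the i-th face of the j-th prism simplex, b i j the j-th
  prism simplex over the i-th face of the base, and c k the k-th twisted base.
  Interior faces cancel in pairs and the diagonal ones telescope.\<close>
lemma prism_double_sum:
  fixes a b :: "nat \<Rightarrow> nat \<Rightarrow> 'v::ab_group_add" and c :: "nat \<Rightarrow> 'v"
  assumes high: "\<And>i j. j < i \<Longrightarrow> i < Suc n \<Longrightarrow> b i j = - a j (Suc i)"
    and low: "\<And>i j. i \<le> j \<Longrightarrow> j < n \<Longrightarrow> b i j = - a (Suc j) i"
    and diagonal: "\<And>j. j < Suc n \<Longrightarrow> a j j = c j"
    and next_diagonal: "\<And>j. j < Suc n \<Longrightarrow> a j (Suc j) = - c (Suc j)"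
  shows "(\<Sum>i<Suc n. \<Sum>j<n. b i j) = c 0 - c (Suc n) - (\<Sum>j<Suc n. \<Sum>i<Suc (Suc n). a j i)"
proof -
  define L where "L j = (\<Sum>i<j. a j i)" for j
  define R where "R j = (\<Sum>i\<in>{Suc (Suc j)..<Suc (Suc n)}. a j i)" for j
  have row_a: "(\<Sum>i<Suc (Suc n). a j i) = L j + (c j - c (Suc j)) + R j" if "j < Suc n" for j
    unfolding sum_split_pair[OF that] diagonal[OF that] next_diagonal[OF that] L_def R_def
    by (simp add: algebra_simps)
  have column_b: "(\<Sum>i<Suc n. b i j) = - L (Suc j) - R j" if "j < n" for j
  proof -
    have "(\<Sum>i<Suc n. b i j) = (\<Sum>i\<in>{0..<Suc j}. b i j) + (\<Sum>i\<in>{Suc j..<Suc n}. b i j)"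
      unfolding atLeast0LessThan[symmetric]
      using that by (intro sum.atLeastLessThan_concat[symmetric]) simp_all
    also have "(\<Sum>i\<in>{0..<Suc j}. b i j) = - L (Suc j)"
      using that low by (simp add: L_def atLeast0LessThan sum_negf)
    also have "(\<Sum>i\<in>{Suc j..<Suc n}. b i j) = (\<Sum>i\<in>{Suc j..<Suc n}. - a j (Suc i))"
      using high by (intro sum.cong) auto
    also have "\<dots> = - R j"
      by (simp only: R_def sum_negf sum.shift_bounds_Suc_ivl)
    finally show ?thesis by simp
  qed
  have "(\<Sum>j<Suc n. \<Sum>i<Suc (Suc n). a j i) = (\<Sum>j<Suc n. L j + (c j - c (Suc j)) + R j)"
    using row_a by (intro sum.cong) auto
  also have "\<dots> = (\<Sum>j<Suc n. L j) + (\<Sum>j<Suc n. c j - c (Suc j)) + (\<Sum>j<Suc n. R j)"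
    by (simp only: sum.distrib)
  also have "(\<Sum>j<Suc n. L j) = (\<Sum>j<n. L (Suc j))"
    by (simp only: sum.lessThan_Suc_shift) (simp add: L_def)
  also have "(\<Sum>j<Suc n. c j - c (Suc j)) = c 0 - c (Suc n)"
    by (rule sum_lessThan_telescope')
  also have "(\<Sum>j<Suc n. R j) = (\<Sum>j<n. R j)"
    by (simp add: R_def)
  finally have sum_a: "(\<Sum>j<Suc n. \<Sum>i<Suc (Suc n). a j i)
      = (\<Sum>j<n. L (Suc j)) + (c 0 - c (Suc n)) + (\<Sum>j<n. R j)" .
  have "(\<Sum>i<Suc n. \<Sum>j<n. b i j) = (\<Sum>j<n. \<Sum>i<Suc n. b i j)"
    by (rule sum.swap)
  also have "\<dots> = (\<Sum>j<n. - L (Suc j) - R j)"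
    using column_b by (intro sum.cong) auto
  finally have sum_b: "(\<Sum>i<Suc n. \<Sum>j<n. b i j) = - (\<Sum>j<n. L (Suc j)) - (\<Sum>j<n. R j)"
    by (simp add: sum_subtractf sum_negf)
  show ?thesis unfolding sum_a sum_b by (simp add: algebra_simps)
qed

context invariant_mean
begin

definition homotopy :: "('g list \<Rightarrow> ('f::real_normed_vector \<Rightarrow>\<^sub>L real)) \<Rightarrow> 'g list \<Rightarrow> ('f \<Rightarrow>\<^sub>L real)" where
  "homotopy f x = (\<Sum>j<length x. ((-1::real) ^ j) *\<^sub>R iter_mean (Suc j) (\<lambda>hs. f (prism x j hs)))"

definition average :: "('g list \<Rightarrow> ('f::real_normed_vector \<Rightarrow>\<^sub>L real)) \<Rightarrow> 'g list \<Rightarrow> ('f \<Rightarrow>\<^sub>L real)" where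
  "average f x = iter_mean (length x) (\<lambda>hs. f (map2 (\<otimes>\<^bsub>G\<^esub>) x hs))"

lemma prism_bounded:
  assumes "x \<in> tuples G n" "j < n" "\<forall>xs\<in>tuples G (Suc n). norm (f xs) \<le> B"
  shows "H_bounded (Suc j) (\<lambda>hs. f (prism x j hs)) B"
  using assms(1,2) prism_in_tuples[of x j] by (intro H_bounded_comp[OF _ assms(3)]) (auto simp: tuples_def)

text \<open>Averaged faces of the prism simplices.  Interior faces are prisms over faces
  of the base (the coordinate lost by omission is averaged away); the two faces at
  the diagonal are twisted bases.\<close>
lemma mean_prism_face_high:
  assumes "j < i" "i < length x"
  shows "iter_mean (Suc j) (\<lambda>hs. f (omit (Suc i) (prism x j hs)))
       = iter_mean (Suc j) (\<lambda>hs. f (prism (omit i x) j hs))"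
  using assms by (intro iter_mean_cong) (simp add: prism_omit_high)

lemma mean_prism_face_low:
  assumes x: "x \<in> tuples G (Suc n)" and ij: "i \<le> j" "j < n"
    and fB: "\<forall>xs\<in>tuples G (Suc n). norm (f xs) \<le> B"
  shows "iter_mean (Suc (Suc j)) (\<lambda>hs. f (omit i (prism x (Suc j) hs)))
       = iter_mean (Suc j) (\<lambda>hs. f (prism (omit i x) j hs))"
proof -
  have "iter_mean (Suc (Suc j)) (\<lambda>hs. f (omit i (prism x (Suc j) hs)))
      = iter_mean (Suc (Suc j)) (\<lambda>hs. f (prism (omit i x) j (omit i hs)))"
    using x ij by (intro iter_mean_cong) (simp add: omit_prism_low tuples_def)
  also have "\<dots> = iter_mean (Suc j) (\<lambda>hs. f (prism (omit i x) j hs))"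
    using ij by (intro iter_mean_omit[where B=B] prism_bounded[OF omit_in_tuples[OF x] _ fB]) auto
  finally show ?thesis .
qed

lemma mean_prism_face_diagonal:
  assumes x: "x \<in> tuples G (Suc n)" and j: "j < Suc n"
    and fB: "\<forall>xs\<in>tuples G (Suc n). norm (f xs) \<le> B"
  shows "iter_mean (Suc j) (\<lambda>hs. f (omit j (prism x j hs))) = iter_mean j (\<lambda>hs. f (twist x j hs))"
proof -
  have lx: "length x = Suc n" and sx: "set x \<subseteq> carrier G"
    using x by (auto simp: tuples_def)
  have "iter_mean (Suc j) (\<lambda>hs. f (omit j (prism x j hs)))
      = iter_mean (Suc j) (\<lambda>hs. f (twist x j (omit j hs)))"
    using j lx by (intro iter_mean_cong) (simp add: omit_prism_diagonal)
  also have "\<dots> = iter_mean j (\<lambda>hs. f (twist x j hs))"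
    using j lx twist_in_tuples[OF sx, of j]
    by (intro iter_mean_omit[where B=B] H_bounded_comp[OF _ fB]) auto
  finally show ?thesis .
qed

lemma mean_prism_face_next:
  assumes "j < length x"
  shows "iter_mean (Suc j) (\<lambda>hs. f (omit (Suc j) (prism x j hs)))
       = iter_mean (Suc j) (\<lambda>hs. f (twist x (Suc j) hs))"
  using assms by (intro iter_mean_cong) (simp add: omit_prism_next)

lemma homotopy_coboundary:
  assumes x: "x \<in> tuples G (Suc n)" and fB: "\<forall>xs\<in>tuples G (Suc n). norm (f xs) \<le> B"
  shows "homotopy (coboundary f) x = (\<Sum>j<Suc n. \<Sum>i<Suc (Suc n).
           ((-1::real) ^ (i + j)) *\<^sub>R iter_mean (Suc j) (\<lambda>hs. f (omit i (prism x j hs))))"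
  unfolding homotopy_def
proof (rule sum.cong)
  have lx: "length x = Suc n" using x by (simp add: tuples_def)
  then show "{..<length x} = {..<Suc n}" by simp
  fix j assume "j \<in> {..<Suc n}"
  then have j: "j < length x" using lx by simp
  have "iter_mean (Suc j) (\<lambda>hs. coboundary f (prism x j hs))
      = iter_mean (Suc j) (\<lambda>hs. \<Sum>i<Suc (Suc n). ((-1::real) ^ i) *\<^sub>R f (omit i (prism x j hs)))"
    using j lx by (intro iter_mean_cong) (simp add: coboundary_omit length_prism)
  also have "\<dots> = (\<Sum>i<Suc (Suc n). ((-1::real) ^ i) *\<^sub>R iter_mean (Suc j) (\<lambda>hs. f (omit i (prism x j hs))))"
    using prism_in_tuples j x
    by (intro iter_mean_lincomb[where B=B] ballI H_bounded_comp[OF _ fB] omit_in_tuples) (auto simp: tuples_def)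
  finally show "((-1::real) ^ j) *\<^sub>R iter_mean (Suc j) (\<lambda>hs. coboundary f (prism x j hs))
      = (\<Sum>i<Suc (Suc n). ((-1::real) ^ (i + j)) *\<^sub>R iter_mean (Suc j) (\<lambda>hs. f (omit i (prism x j hs))))"
    by (simp only: scaleR_sum_right scaleR_scaleR power_add mult.commute)
qed

lemma coboundary_homotopy:
  assumes "length x = Suc n"
  shows "coboundary (homotopy f) x = (\<Sum>i<Suc n. \<Sum>j<n.
           ((-1::real) ^ (i + j)) *\<^sub>R iter_mean (Suc j) (\<lambda>hs. f (prism (omit i x) j hs)))"
  unfolding coboundary_omit assms
proof (rule sum.cong[OF refl])
  fix i assume "i \<in> {..<Suc n}"
  then have "length (omit i x) = n" using assms by (simp add: length_omit)
  then show "((-1::real) ^ i) *\<^sub>R homotopy f (omit i x)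
      = (\<Sum>j<n. ((-1::real) ^ (i + j)) *\<^sub>R iter_mean (Suc j) (\<lambda>hs. f (prism (omit i x) j hs)))"
    by (simp add: homotopy_def scaleR_sum_right power_add)
qed

text \<open>The homotopy formula d(S f) = f - A f - S(d f) for a bounded cochain f: the
  averaged faces satisfy the hypotheses of the abstract prism cancellation.\<close>
lemma prism_identity:
  fixes f :: "'g list \<Rightarrow> ('f::real_normed_vector \<Rightarrow>\<^sub>L real)"
  assumes x: "x \<in> tuples G (Suc n)" and fB: "\<forall>xs\<in>tuples G (Suc n). norm (f xs) \<le> B"
  shows "coboundary (homotopy f) x = f x - average f x - homotopy (coboundary f) x"
proof -
  have lx: "length x = Suc n" using x by (simp add: tuples_def)
  define a where "a j i = ((-1::real) ^ (i + j)) *\<^sub>R iter_mean (Suc j) (\<lambda>hs. f (omit i (prism x j hs)))" for j i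
  define b where "b i j = ((-1::real) ^ (i + j)) *\<^sub>R iter_mean (Suc j) (\<lambda>hs. f (prism (omit i x) j hs))" for i j
  define c where "c k = iter_mean k (\<lambda>hs. f (twist x k hs))" for k
  have "b i j = - a j (Suc i)" if "j < i" "i < Suc n" for i j
    using mean_prism_face_high[of j i x f] that lx by (simp add: a_def b_def)
  moreover have "b i j = - a (Suc j) i" if "i \<le> j" "j < n" for i j
    using mean_prism_face_low[OF x that fB] by (simp add: a_def b_def)
  moreover have "a j j = c j" if "j < Suc n" for j
    using mean_prism_face_diagonal[OF x that fB] by (simp add: a_def c_def)
  moreover have "a j (Suc j) = - c (Suc j)" if "j < Suc n" for j
    using mean_prism_face_next[of j x f] that lx by (simp add: a_def c_def)
  ultimately have "(\<Sum>i<Suc n. \<Sum>j<n. b i j) = c 0 - c (Suc n) - (\<Sum>j<Suc n. \<Sum>i<Suc (Suc n). a j i)"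
    by (rule prism_double_sum)
  moreover have "c 0 = f x" "c (Suc n) = average f x"
    using lx by (simp_all add: c_def twist_def average_def)
  ultimately show ?thesis
    by (simp only: homotopy_coboundary[OF x fB] coboundary_homotopy[OF lx] a_def b_def)
qed

end

section \<open>Vanishing of bounded cohomology\<close>

lemma (in group) conjugate_cancel:
  assumes "t \<in> carrier G" "h \<in> carrier G"
  shows "inv t \<otimes> (t \<otimes> h \<otimes> inv t) \<otimes> t = h"
proof -
  have "inv t \<otimes> (t \<otimes> h) = h" using assms by (simp add: m_assoc[symmetric])
  then show ?thesis using assms by (simp add: m_assoc)
qed

lemma normalish_conjugators_infinite:
  assumes "group G" "normalish G H" "set x \<subseteq> carrier G" "x \<noteq> []"
  shows "infinite {g \<in> carrier G. \<forall>t\<in>set x. inv\<^bsub>G\<^esub> t \<otimes>\<^bsub>G\<^esub> g \<otimes>\<^bsub>G\<^esub> t \<in> H}"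
proof -
  interpret G: group G by fact
  define K where "K = (\<Inter>t\<in>set x. (\<lambda>h. t \<otimes>\<^bsub>G\<^esub> h \<otimes>\<^bsub>G\<^esub> inv\<^bsub>G\<^esub> t) ` H)"
  have H: "H \<subseteq> carrier G"
    using assms(2) unfolding normalish_def by (blast dest: subgroup.subset)
  have "infinite K"
    using assms(2-4) unfolding normalish_def K_def by blast
  moreover have "K \<subseteq> {g \<in> carrier G. \<forall>t\<in>set x. inv\<^bsub>G\<^esub> t \<otimes>\<^bsub>G\<^esub> g \<otimes>\<^bsub>G\<^esub> t \<in> H}"
  proof
    fix g assume g: "g \<in> K"
    have conj: "\<exists>h\<in>H. g = t \<otimes>\<^bsub>G\<^esub> h \<otimes>\<^bsub>G\<^esub> inv\<^bsub>G\<^esub> t" if "t \<in> set x" for t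
      using g that unfolding K_def by blast
    obtain t0 where t0: "t0 \<in> set x" using assms(4) by (cases x) auto
    then obtain h0 where "h0 \<in> H" "g = t0 \<otimes>\<^bsub>G\<^esub> h0 \<otimes>\<^bsub>G\<^esub> inv\<^bsub>G\<^esub> t0"
      using conj by blast
    then have "g \<in> carrier G" using t0 H assms(3) by auto
    moreover have "inv\<^bsub>G\<^esub> t \<otimes>\<^bsub>G\<^esub> g \<otimes>\<^bsub>G\<^esub> t \<in> H" if t: "t \<in> set x" for t
    proof -
      obtain h where "h \<in> H" "g = t \<otimes>\<^bsub>G\<^esub> h \<otimes>\<^bsub>G\<^esub> inv\<^bsub>G\<^esub> t"
        using conj[OF t] by blast
      moreover have "t \<in> carrier G" "h \<in> carrier G" using t H assms(3) \<open>h \<in> H\<close> by auto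
      ultimately show ?thesis using G.conjugate_cancel[of t h] by simp
    qed
    ultimately show "g \<in> {g \<in> carrier G. \<forall>t\<in>set x. inv\<^bsub>G\<^esub> t \<otimes>\<^bsub>G\<^esub> g \<otimes>\<^bsub>G\<^esub> t \<in> H}"
      by blast
  qed
  ultimately show ?thesis using finite_subset by blast
qed

context invariant_mean
begin

lemma homotopy_bounded:
  assumes fB: "\<forall>xs\<in>tuples G (Suc n). norm (f xs) \<le> B"
  shows "\<forall>xs\<in>tuples G n. norm (homotopy f xs) \<le> real n * B"
proof
  fix xs assume xs: "xs \<in> tuples G n"
  then have lx: "length xs = n" by (simp add: tuples_def)
  have "norm (homotopy f xs)
      \<le> (\<Sum>j<n. norm (((-1::real) ^ j) *\<^sub>R iter_mean (Suc j) (\<lambda>hs. f (prism xs j hs))))"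
    unfolding homotopy_def lx by (rule norm_sum)
  also have "\<dots> \<le> (\<Sum>j<n. B)"
  proof (rule sum_mono)
    fix j assume "j \<in> {..<n}"
    then have "norm (iter_mean (Suc j) (\<lambda>hs. f (prism xs j hs))) \<le> B"
      by (intro iter_mean_norm prism_bounded[OF xs _ fB]) simp
    then show "norm (((-1::real) ^ j) *\<^sub>R iter_mean (Suc j) (\<lambda>hs. f (prism xs j hs))) \<le> B"
      by simp
  qed
  finally show "norm (homotopy f xs) \<le> real n * B" by simp
qed

lemma homotopy_equivariant:
  assumes T: "dual_isometry T" and g: "g \<in> carrier G"
    and fB: "\<forall>xs\<in>tuples G (Suc n). norm (f xs) \<le> B"
    and feq: "\<forall>xs\<in>tuples G (Suc n). f (map (\<lambda>y. g \<otimes>\<^bsub>G\<^esub> y) xs) = T (f xs)"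
    and xs: "xs \<in> tuples G n"
  shows "homotopy f (map (\<lambda>y. g \<otimes>\<^bsub>G\<^esub> y) xs) = T (homotopy f xs)"
proof -
  have lx: "length xs = n" and sx: "set xs \<subseteq> carrier G"
    using xs by (auto simp: tuples_def)
  have "T (homotopy f xs) = (\<Sum>j<n. ((-1::real) ^ j) *\<^sub>R T (iter_mean (Suc j) (\<lambda>hs. f (prism xs j hs))))"
    unfolding homotopy_def lx using T by (simp add: dual_isometry_def linear_sum linear_cmul)
  also have "\<dots> = (\<Sum>j<n. ((-1::real) ^ j) *\<^sub>R
                       iter_mean (Suc j) (\<lambda>hs. f (prism (map (\<lambda>y. g \<otimes>\<^bsub>G\<^esub> y) xs) j hs)))"
  proof (rule sum.cong[OF refl])
    fix j assume j: "j \<in> {..<n}"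
    have "T (iter_mean (Suc j) (\<lambda>hs. f (prism xs j hs))) = iter_mean (Suc j) (\<lambda>hs. T (f (prism xs j hs)))"
      using j by (intro dual_isometry_iter_mean[OF prism_bounded[OF xs _ fB] T]) simp
    also have "\<dots> = iter_mean (Suc j) (\<lambda>hs. f (prism (map (\<lambda>y. g \<otimes>\<^bsub>G\<^esub> y) xs) j hs))"
    proof (rule iter_mean_cong)
      fix hs assume "length hs = Suc j" "set hs \<subseteq> H"
      then show "T (f (prism xs j hs)) = f (prism (map (\<lambda>y. g \<otimes>\<^bsub>G\<^esub> y) xs) j hs)"
        using feq prism_in_tuples[OF sx, of j hs] map_mult_prism[OF g sx] j lx by auto
    qed
    finally show "((-1::real) ^ j) *\<^sub>R T (iter_mean (Suc j) (\<lambda>hs. f (prism xs j hs)))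
        = ((-1::real) ^ j) *\<^sub>R iter_mean (Suc j) (\<lambda>hs. f (prism (map (\<lambda>y. g \<otimes>\<^bsub>G\<^esub> y) xs) j hs))"
      by (simp only:)
  qed
  also have "\<dots> = homotopy f (map (\<lambda>y. g \<otimes>\<^bsub>G\<^esub> y) xs)"
    by (simp only: homotopy_def length_map lx)
  finally show ?thesis by simp
qed

text \<open>If g conjugates every entry of x into H, then left multiplication by g on the
  twisted simplices is a right translation by elements of H, which the mean absorbs.\<close>
lemma average_fixed_by_conjugator:
  assumes T: "dual_isometry T" and g: "g \<in> carrier G"
    and conj: "\<forall>t\<in>set x. inv\<^bsub>G\<^esub> t \<otimes>\<^bsub>G\<^esub> g \<otimes>\<^bsub>G\<^esub> t \<in> H"
    and fB: "\<forall>xs\<in>tuples G (length x). norm (f xs) \<le> B"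
    and feq: "\<forall>xs\<in>tuples G (length x). f (map (\<lambda>y. g \<otimes>\<^bsub>G\<^esub> y) xs) = T (f xs)"
    and sx: "set x \<subseteq> carrier G"
  shows "T (average f x) = average f x"
proof -
  define cs where "cs = map (\<lambda>t. inv\<^bsub>G\<^esub> t \<otimes>\<^bsub>G\<^esub> g \<otimes>\<^bsub>G\<^esub> t) x"
  have bounded: "H_bounded (length x) (\<lambda>hs. f (map2 (\<otimes>\<^bsub>G\<^esub>) x hs)) B"
    using map2_mult_in_carrier[OF sx] by (intro H_bounded_comp[OF _ fB]) (auto simp: tuples_def)
  have "T (average f x) = iter_mean (length x) (\<lambda>hs. T (f (map2 (\<otimes>\<^bsub>G\<^esub>) x hs)))"
    unfolding average_def by (rule dual_isometry_iter_mean[OF bounded T])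
  also have "\<dots> = iter_mean (length x) (\<lambda>hs. f (map2 (\<otimes>\<^bsub>G\<^esub>) x (map2 (\<otimes>\<^bsub>G\<^esub>) cs hs)))"
  proof (rule iter_mean_cong)
    fix hs assume hs: "length hs = length x" "set hs \<subseteq> H"
    then have "map2 (\<otimes>\<^bsub>G\<^esub>) x hs \<in> tuples G (length x)"
      using map2_mult_in_carrier[OF sx] by (auto simp: tuples_def)
    then have translated: "f (map (\<lambda>y. g \<otimes>\<^bsub>G\<^esub> y) (map2 (\<otimes>\<^bsub>G\<^esub>) x hs)) = T (f (map2 (\<otimes>\<^bsub>G\<^esub>) x hs))"
      using feq by blast
    have "map (\<lambda>y. g \<otimes>\<^bsub>G\<^esub> y) (map2 (\<otimes>\<^bsub>G\<^esub>) x hs) = map2 (\<otimes>\<^bsub>G\<^esub>) x (map2 (\<otimes>\<^bsub>G\<^esub>) cs hs)"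
      unfolding cs_def using hs H_subset by (intro map_mult_conjugate[OF g sx]) auto
    then show "T (f (map2 (\<otimes>\<^bsub>G\<^esub>) x hs)) = f (map2 (\<otimes>\<^bsub>G\<^esub>) x (map2 (\<otimes>\<^bsub>G\<^esub>) cs hs))"
      by (simp only: translated[symmetric])
  qed
  also have "\<dots> = average f x"
    unfolding average_def using conj by (intro iter_mean_translate[OF _ _ bounded]) (auto simp: cs_def)
  finally show ?thesis .
qed

text \<open>With mixing coefficients the average of an equivariant cochain vanishes: its
  value at x is fixed by the infinitely many conjugators of x.\<close>
lemma average_vanishes:
  assumes iso: "\<And>s. s \<in> carrier G \<Longrightarrow> dual_isometry (\<pi> s)"
    and mix: "mixing G \<pi>" and nm: "normalish G H"
    and fB: "\<forall>xs\<in>tuples G (Suc n). norm (f xs) \<le> B"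
    and feq: "\<forall>g\<in>carrier G. \<forall>xs\<in>tuples G (Suc n). f (map (\<lambda>y. g \<otimes>\<^bsub>G\<^esub> y) xs) = \<pi> g (f xs)"
    and x: "x \<in> tuples G (Suc n)"
  shows "average f x = 0"
proof (rule ccontr)
  assume "average f x \<noteq> 0"
  then have "finite {s \<in> carrier G. \<pi> s (average f x) = average f x}"
    using mix unfolding mixing_def by blast
  moreover have "{g \<in> carrier G. \<forall>t\<in>set x. inv\<^bsub>G\<^esub> t \<otimes>\<^bsub>G\<^esub> g \<otimes>\<^bsub>G\<^esub> t \<in> H}
      \<subseteq> {s \<in> carrier G. \<pi> s (average f x) = average f x}"
  proof (intro subsetI)
    fix g assume g: "g \<in> {g \<in> carrier G. \<forall>t\<in>set x. inv\<^bsub>G\<^esub> t \<otimes>\<^bsub>G\<^esub> g \<otimes>\<^bsub>G\<^esub> t \<in> H}"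
    have "length x = Suc n" "set x \<subseteq> carrier G" using x by (auto simp: tuples_def)
    then have "\<pi> g (average f x) = average f x"
      using g fB feq by (intro average_fixed_by_conjugator[OF iso]) auto
    then show "g \<in> {s \<in> carrier G. \<pi> s (average f x) = average f x}" using g by blast
  qed
  moreover have "infinite {g \<in> carrier G. \<forall>t\<in>set x. inv\<^bsub>G\<^esub> t \<otimes>\<^bsub>G\<^esub> g \<otimes>\<^bsub>G\<^esub> t \<in> H}"
    using x by (intro normalish_conjugators_infinite[OF group nm]) (auto simp: tuples_def)
  ultimately show False using finite_subset by blast
qed

lemma homotopy_of_cocycle:
  assumes cocycle: "\<forall>xs\<in>tuples G (Suc (Suc n)). coboundary f xs = 0"
    and x: "x \<in> tuples G (Suc n)"
  shows "homotopy (coboundary f) x = 0"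
  unfolding homotopy_def
proof (rule sum.neutral, intro ballI)
  fix j assume "j \<in> {..<length x}"
  then have "iter_mean (Suc j) (\<lambda>hs. coboundary f (prism x j hs)) = iter_mean (Suc j) (\<lambda>_. 0)"
    using x cocycle prism_in_tuples[of x j] by (intro iter_mean_cong) (auto simp: tuples_def)
  then show "((-1::real) ^ j) *\<^sub>R iter_mean (Suc j) (\<lambda>hs. coboundary f (prism x j hs)) = 0"
    by (simp only: iter_mean_const scaleR_zero_right)
qed

lemma bounded_cohomology_vanishes:
  assumes iso: "\<And>s. s \<in> carrier G \<Longrightarrow> dual_isometry (\<pi> s)"
    and mix: "mixing G \<pi>" and nm: "normalish G H"
  shows "bounded_cohomology_trivial G \<pi> n"
  unfolding bounded_cohomology_trivial_def
proof (intro allI impI)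
  fix f assume "bcochain G \<pi> n f \<and> (\<forall>xs\<in>tuples G (Suc (Suc n)). coboundary f xs = 0)"
  then obtain B where fB: "\<forall>xs\<in>tuples G (Suc n). norm (f xs) \<le> B"
    and feq: "\<forall>g\<in>carrier G. \<forall>xs\<in>tuples G (Suc n). f (map (\<lambda>y. g \<otimes>\<^bsub>G\<^esub> y) xs) = \<pi> g (f xs)"
    and cocycle: "\<forall>xs\<in>tuples G (Suc (Suc n)). coboundary f xs = 0"
    unfolding bcochain_def by blast
  have primitive: "f xs = coboundary (homotopy f) xs" if "xs \<in> tuples G (Suc n)" for xs
    using prism_identity[OF that fB] average_vanishes[OF iso mix nm fB feq that]
      homotopy_of_cocycle[OF cocycle that] by simp
  show "if n = 0 then \<forall>xs\<in>tuples G 1. f xs = 0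
        else \<exists>h. bcochain G \<pi> (n - 1) h \<and> (\<forall>xs\<in>tuples G (Suc n). f xs = coboundary h xs)"
  proof (cases n)
    case 0
    then show ?thesis
      using primitive by (auto simp: tuples_def length_Suc_conv coboundary_omit homotopy_def)
  next
    case (Suc k)
    have "bcochain G \<pi> k (homotopy f)"
      unfolding bcochain_def
    proof (intro conjI ballI)
      show "\<exists>C. \<forall>xs\<in>tuples G (Suc k). norm (homotopy f xs) \<le> C"
        using homotopy_bounded[OF fB] Suc by blast
      fix g xs assume "g \<in> carrier G" "xs \<in> tuples G (Suc k)"
      then show "homotopy f (map (\<lambda>y. g \<otimes>\<^bsub>G\<^esub> y) xs) = \<pi> g (homotopy f xs)"
        using feq Suc by (intro homotopy_equivariant[OF iso _ fB]) auto
    qed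
    then show ?thesis using primitive Suc by auto
  qed
qed

end

theorem proposition3p2:
  fixes G :: "('g, 'b) monoid_scheme"
  assumes "group G"
    and "\<exists>H. normalish G H \<and> amenable_subgroup G H"
  shows "\<forall>(\<pi> :: 'g \<Rightarrow> ('f::banach \<Rightarrow>\<^sub>L real) \<Rightarrow> ('f \<Rightarrow>\<^sub>L real)).
           coefficient_module G \<pi> \<and> mixing G \<pi> \<longrightarrow> (\<forall>n. bounded_cohomology_trivial G \<pi> n)"
proof (rule allI, rule impI)
  fix \<pi> :: "'g \<Rightarrow> ('f::banach \<Rightarrow>\<^sub>L real) \<Rightarrow> ('f \<Rightarrow>\<^sub>L real)"
  assume \<pi>: "coefficient_module G \<pi> \<and> mixing G \<pi>"
  obtain H where normalish: "normalish G H" and amenable: "amenable_subgroup G H"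
    using assms(2) by blast
  obtain m where mean: "invariant_mean G H m"
    using amenable_subgroup_invariant_mean[OF assms(1) amenable] by blast
  have "dual_isometry (\<pi> s)" if "s \<in> carrier G" for s
    using coefficient_module_dual_isometry[of G \<pi> s] \<pi> that by blast
  then show "\<forall>n. bounded_cohomology_trivial G \<pi> n"
    using invariant_mean.bounded_cohomology_vanishes[OF mean] normalish \<pi> by blast
qed

end
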